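(* If $s\in[0,1]$, then $U\chi_{[0,s]}(z)=\sqrt{s}\,e^{\frac12\ln s\,\frac{1+z}{1-z}}$ for $z\in\mathbb{D}$.
   Context: $\chi_E$ is the characteristic function of $E\subseteq[0,1]$. $\mathbb{D}$ is the open unit disc, $H^2$ its Hardy space, $k_\alpha(z)=\frac{1}{1-\bar\alpha z}$. The Sarason transform $U$ is the unique unitary operator from $L^2([0,1])$ onto $H^2$ with $U(x^n)=\frac{1}{n+1}k_{\frac{n}{n+1}}$ for all integers $n\ge0$. *)

theory Defs
  imports "HOL-Analysis.Analysis"
begin

text \<open>L^2([0,1]) (complex valued), represented by Borel functions on the real line whose
  values on [0,1] matter.\<close>
definition L2_01 :: "(real \<Rightarrow> complex) set" where
  "L2_01 = {f. f \<in> borel_measurable lborel \<and>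
               set_integrable lborel {0..1} (\<lambda>x. (norm (f x))\<^sup>2)}"

definition L2_inner :: "(real \<Rightarrow> complex) \<Rightarrow> (real \<Rightarrow> complex) \<Rightarrow> complex" where
  "L2_inner f g = (LINT x:{0..1}|lborel. f x * cnj (g x))"

definition taylor_coeff :: "(complex \<Rightarrow> complex) \<Rightarrow> nat \<Rightarrow> complex" where
  "taylor_coeff f n = (deriv ^^ n) f 0 / of_nat (fact n)"

definition H2 :: "(complex \<Rightarrow> complex) set" where
  "H2 = {f. f holomorphic_on ball 0 1 \<and> summable (\<lambda>n. (norm (taylor_coeff f n))\<^sup>2)}"

definition H2_inner :: "(complex \<Rightarrow> complex) \<Rightarrow> (complex \<Rightarrow> complex) \<Rightarrow> complex" where
  "H2_inner f g = (\<Sum>n. taylor_coeff f n * cnj (taylor_coeff g n))"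

definition kernel :: "complex \<Rightarrow> complex \<Rightarrow> complex" where
  "kernel \<alpha> z = 1 / (1 - cnj \<alpha> * z)"

text \<open>U is a unitary operator L^2([0,1]) -> H^2 (functions in H^2 identified
  by their values on the disc) with U(x^n) = 1/(n+1) k_{n/(n+1)}.\<close>
definition sarason_transform :: "((real \<Rightarrow> complex) \<Rightarrow> (complex \<Rightarrow> complex)) \<Rightarrow> bool" where
  "sarason_transform U \<longleftrightarrow>
     (\<forall>f\<in>L2_01. U f \<in> H2) \<and>
     (\<forall>f\<in>L2_01. \<forall>g\<in>L2_01. \<forall>a::complex. \<forall>z\<in>ball 0 1.
         U (\<lambda>x. a * f x + g x) z = a * U f z + U g z) \<and>
     (\<forall>f\<in>L2_01. \<forall>g\<in>L2_01. H2_inner (U f) (U g) = L2_inner f g) \<and>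
     (\<forall>h\<in>H2. \<exists>f\<in>L2_01. \<forall>z\<in>ball 0 1. U f z = h z) \<and>
     (\<forall>n::nat. \<forall>z\<in>ball 0 1.
         U (\<lambda>x. complex_of_real (x ^ n)) z
           = (1 / of_nat (n + 1)) * kernel (of_real (real n / real (n + 1))) z)"

end

theory Submission
  imports Defs "HOL-Complex_Analysis.Complex_Analysis"
begin

text \<open>
  Let g be the preimage under U of the reproducing kernel k_z. Since U preserves inner products,
  (U f)(z) = <U f, k_z> = <f, g> for every f in L^2([0,1]); so (U chi_[0,s])(z) is the integral
  of conj g over [0,s], and the moments of conj g are (U x^n)(z) = 1/(1 + n(1 - z)). These are
  also the moments of the density a x^(a-1) with a = 1/(1 - z), Re a > 0. A complex measure on
  a compact interval is determined by its moments (Weierstrass approximation, then dominated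
  convergence from continuous ramps to the indicator of a half-line), hence the integral of
  conj g over [0,s] equals that of a x^(a-1), namely s^a = sqrt s * exp (ln s / 2 * (1+z)/(1-z)).
\<close>

lemma tendsto_ramp_indicator_atMost:
  fixes s x :: real
  shows "(\<lambda>k. min 1 (max 0 (1 - real (Suc k) * (x - s)))) \<longlonglongrightarrow> indicator {..s} x"
proof (cases "x \<le> s")
  case True
  have "min 1 (max 0 (1 - real (Suc k) * (x - s))) = 1" for k
  proof -
    have "real (Suc k) * (x - s) \<le> 0"
      using True by (intro mult_nonneg_nonpos) auto
    then show ?thesis
      by (simp add: min_def max_def del: of_nat_Suc)
  qed
  then show ?thesis
    using True by simp
next
  case False
  obtain N :: nat where N: "real N > 1 / (x - s)"
    using reals_Archimedean2 by blast
  have "min 1 (max 0 (1 - real (Suc k) * (x - s))) = 0" if "k \<ge> N" for k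
  proof -
    have "real N * (x - s) \<le> real (Suc k) * (x - s)"
      using that False by (intro mult_right_mono) auto
    moreover have "real N * (x - s) > 1"
      using N False by (simp add: field_simps)
    ultimately show ?thesis by simp
  qed
  then have "(\<lambda>k. min 1 (max 0 (1 - real (Suc k) * (x - s)))) \<longlonglongrightarrow> 0"
    by (intro tendsto_eventually eventually_sequentiallyI)
  then show ?thesis
    using False by simp
qed

context
  fixes E :: "real \<Rightarrow> complex" and K :: "real set"
  assumes E: "integrable lborel E" and K: "compact K" and E0: "\<And>x. x \<notin> K \<Longrightarrow> E x = 0"
begin

lemma integrable_continuous_mult_if_vanishing_outside_compact:
  assumes \<phi>: "continuous_on UNIV \<phi>"
  shows "integrable lborel (\<lambda>x. of_real (\<phi> x) * E x)"
proof -
  have "bounded (\<phi> ` K)"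
    using compact_imp_bounded[OF compact_continuous_image[OF continuous_on_subset[OF \<phi>] K]] by simp
  then obtain B where B: "\<And>x. x \<in> K \<Longrightarrow> \<bar>\<phi> x\<bar> \<le> B"
    by (auto simp: bounded_iff)
  show ?thesis
  proof (rule Bochner_Integration.integrable_bound[of _ "\<lambda>x. B * norm (E x)"])
    show "integrable lborel (\<lambda>x. B * norm (E x))"
      using E by simp
    have "\<phi> \<in> borel_measurable lborel"
      using \<phi> by (simp add: borel_measurable_continuous_onI)
    then show "(\<lambda>x. of_real (\<phi> x) * E x) \<in> borel_measurable lborel"
      using borel_measurable_integrable[OF E] by measurable
    show "AE x in lborel. norm (of_real (\<phi> x) * E x) \<le> norm (B * norm (E x))"
    proof (rule AE_I2)
      fix x
      show "norm (of_real (\<phi> x) * E x) \<le> norm (B * norm (E x))"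
        using B[of x] E0[of x] by (cases "x \<in> K") (auto simp: norm_mult intro: mult_right_mono)
    qed
  qed
qed

context
  assumes moments: "\<And>n. integral\<^sup>L lborel (\<lambda>x. of_real (x ^ n) * E x) = 0"
begin

lemma integral_polynomial_mult_eq_0_if_moments_eq_0:
  assumes p: "real_polynomial_function p"
  shows "integral\<^sup>L lborel (\<lambda>x. of_real (p x) * E x) = 0"
proof -
  obtain a n where p_eq: "p = (\<lambda>x. \<Sum>i\<le>n. a i * x ^ i)"
    using p real_polynomial_function_iff_sum by blast
  have "integrable lborel (\<lambda>x. of_real (x ^ i) * E x)" for i
    by (intro integrable_continuous_mult_if_vanishing_outside_compact continuous_intros)
  then have "integral\<^sup>L lborel (\<lambda>x. of_real (p x) * E x)
      = (\<Sum>i\<le>n. of_real (a i) * integral\<^sup>L lborel (\<lambda>x. of_real (x ^ i) * E x))"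
    by (simp add: p_eq sum_distrib_right mult.assoc del: of_real_power)
  also have "\<dots> = 0"
    using moments by simp
  finally show ?thesis .
qed

lemma norm_integral_continuous_mult_le_if_moments_eq_0:
  assumes \<phi>: "continuous_on UNIV \<phi>" and e: "e > 0"
  shows "norm (integral\<^sup>L lborel (\<lambda>x. of_real (\<phi> x) * E x)) \<le> e * integral\<^sup>L lborel (\<lambda>x. norm (E x))"
proof -
  obtain p where p: "real_polynomial_function p" and approx: "\<And>x. x \<in> K \<Longrightarrow> \<bar>\<phi> x - p x\<bar> < e"
    using Stone_Weierstrass_real_polynomial_function[OF K continuous_on_subset[OF \<phi> subset_UNIV] e]
    by blast
  have cont_p: "continuous_on UNIV p"
    using p continuous_on_polymonial_function real_polynomial_function_eq by blast
  have int_p: "integrable lborel (\<lambda>x. of_real (p x) * E x)"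
    by (rule integrable_continuous_mult_if_vanishing_outside_compact[OF cont_p])
  have int_diff: "integrable lborel (\<lambda>x. of_real (\<phi> x - p x) * E x)"
    using \<phi> cont_p
    by (intro integrable_continuous_mult_if_vanishing_outside_compact continuous_on_diff)
  have bound: "norm (of_real (\<phi> x - p x) * E x) \<le> e * norm (E x)" for x
  proof (cases "x \<in> K")
    case True
    then show ?thesis
      using approx[OF True] unfolding norm_mult norm_of_real by (intro mult_right_mono) auto
  qed (simp add: E0)
  have "integral\<^sup>L lborel (\<lambda>x. of_real (\<phi> x) * E x)
      = integral\<^sup>L lborel (\<lambda>x. of_real (\<phi> x - p x) * E x + of_real (p x) * E x)"
    by (simp add: algebra_simps)
  also have "\<dots> = integral\<^sup>L lborel (\<lambda>x. of_real (\<phi> x - p x) * E x)"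
    using int_p int_diff integral_polynomial_mult_eq_0_if_moments_eq_0[OF p]
    by simp
  finally have "norm (integral\<^sup>L lborel (\<lambda>x. of_real (\<phi> x) * E x))
      = norm (integral\<^sup>L lborel (\<lambda>x. of_real (\<phi> x - p x) * E x))"
    by simp
  also have "\<dots> \<le> integral\<^sup>L lborel (\<lambda>x. norm (of_real (\<phi> x - p x) * E x))"
    by (rule integral_norm_bound)
  also have "\<dots> \<le> integral\<^sup>L lborel (\<lambda>x. e * norm (E x))"
    using int_diff E bound by (intro integral_mono) auto
  finally show ?thesis
    by simp
qed

lemma integral_continuous_mult_eq_0_if_moments_eq_0:
  assumes \<phi>: "continuous_on UNIV \<phi>"
  shows "integral\<^sup>L lborel (\<lambda>x. of_real (\<phi> x) * E x) = 0"
proof -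
  let ?I = "integral\<^sup>L lborel (\<lambda>x. of_real (\<phi> x) * E x)"
  define N where "N = integral\<^sup>L lborel (\<lambda>x. norm (E x))"
  have N: "N \<ge> 0"
    unfolding N_def by simp
  have "norm ?I \<le> 0 + e" if e: "e > 0" for e
  proof -
    have "e / (N + 1) > 0"
      using e N by simp
    then have "norm ?I \<le> e / (N + 1) * N"
      unfolding N_def by (rule norm_integral_continuous_mult_le_if_moments_eq_0[OF \<phi>])
    also have "\<dots> \<le> e"
      using e N by (simp add: pos_divide_le_eq algebra_simps)
    finally show ?thesis
      by simp
  qed
  then show ?thesis
    using field_le_epsilon[of "norm ?I" 0] by simp
qed

lemma integral_indicator_atMost_mult_eq_0_if_moments_eq_0:
  shows "integral\<^sup>L lborel (\<lambda>x. indicator {..s} x * E x) = 0"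
proof -
  define \<phi> where "\<phi> k x = min 1 (max 0 (1 - real (Suc k) * (x - s)))" for k and x :: real
  have cont: "continuous_on UNIV (\<phi> k)" for k
    unfolding \<phi>_def by (intro continuous_intros)
  have "(\<lambda>k. integral\<^sup>L lborel (\<lambda>x. of_real (\<phi> k x) * E x))
          \<longlonglongrightarrow> integral\<^sup>L lborel (\<lambda>x. indicator {..s} x * E x)"
  proof (rule integral_dominated_convergence[where w = "\<lambda>x. norm (E x)"])
    show "(\<lambda>x. of_real (\<phi> k x) * E x) \<in> borel_measurable lborel" for k
      using integrable_continuous_mult_if_vanishing_outside_compact[OF cont] by simp
    show "(\<lambda>x. indicator {..s} x * E x) \<in> borel_measurable lborel"
      using borel_measurable_integrable[OF E] by measurable
    show "integrable lborel (\<lambda>x. norm (E x))"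
      using E by simp
    show "AE x in lborel. (\<lambda>k. of_real (\<phi> k x) * E x) \<longlonglongrightarrow> indicator {..s} x * E x"
    proof (rule AE_I2)
      fix x
      have "(\<lambda>k. of_real (\<phi> k x)) \<longlonglongrightarrow> (of_real (indicator {..s} x) :: complex)"
        unfolding \<phi>_def by (intro tendsto_of_real tendsto_ramp_indicator_atMost)
      then show "(\<lambda>k. of_real (\<phi> k x) * E x) \<longlonglongrightarrow> indicator {..s} x * E x"
        using tendsto_mult_right by (force simp: indicator_def)
    qed
    show "AE x in lborel. norm (of_real (\<phi> k x) * E x) \<le> norm (E x)" for k
      by (simp add: \<phi>_def norm_mult mult_left_le_one_le)
  qed
  moreover have "integral\<^sup>L lborel (\<lambda>x. of_real (\<phi> k x) * E x) = 0" for k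
    by (rule integral_continuous_mult_eq_0_if_moments_eq_0[OF cont])
  ultimately show ?thesis
    using LIMSEQ_unique[OF _ tendsto_const] by fastforce
qed

end

end

lemma set_integral_atMost_eq_if_moments_eq:
  fixes f h :: "real \<Rightarrow> complex"
  assumes K: "compact K" and f: "set_integrable lborel K f" and h: "set_integrable lborel K h"
    and moments: "\<And>n. (LINT x:K|lborel. of_real (x ^ n) * f x) = (LINT x:K|lborel. of_real (x ^ n) * h x)"
  shows "(LINT x:K \<inter> {..s}|lborel. f x) = (LINT x:K \<inter> {..s}|lborel. h x)"
proof -
  define E where "E x = indicator K x *\<^sub>R (f x - h x)" for x
  have E: "integrable lborel E"
    using set_integral_diff(1)[OF f h] unfolding E_def set_integrable_def .
  have moment_integrable: "set_integrable lborel K (\<lambda>x. of_real (x ^ n) * g x)"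
    if "set_integrable lborel K g" for g :: "real \<Rightarrow> complex" and n
  proof -
    have "integrable lborel (\<lambda>x. of_real (x ^ n) * (indicator K x *\<^sub>R g x))"
      using that unfolding set_integrable_def
      by (intro integrable_continuous_mult_if_vanishing_outside_compact[OF _ K])
        (auto intro: continuous_intros)
    then show ?thesis
      unfolding set_integrable_def by simp
  qed
  have E_moments: "integral\<^sup>L lborel (\<lambda>x. of_real (x ^ n) * E x)
      = (LINT x:K|lborel. of_real (x ^ n) * f x) - (LINT x:K|lborel. of_real (x ^ n) * h x)" for n
    using set_integral_diff(2)[OF moment_integrable[OF f] moment_integrable[OF h]]
    unfolding set_lebesgue_integral_def E_def by (simp add: algebra_simps)
  have "integral\<^sup>L lborel (\<lambda>x. indicator {..s} x * E x) = 0"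
    by (rule integral_indicator_atMost_mult_eq_0_if_moments_eq_0[OF E K])
      (simp add: E_def, simp only: E_moments moments diff_self)
  moreover have "integral\<^sup>L lborel (\<lambda>x. indicator {..s} x * E x) = (LINT x:K \<inter> {..s}|lborel. f x - h x)"
    unfolding set_lebesgue_integral_def E_def
    by (intro Bochner_Integration.integral_cong) (auto simp: indicator_def)
  moreover have "K \<inter> {..s} \<in> sets lborel"
    using K by (simp add: compact_imp_closed)
  then have "(LINT x:K \<inter> {..s}|lborel. f x - h x)
      = (LINT x:K \<inter> {..s}|lborel. f x) - (LINT x:K \<inter> {..s}|lborel. h x)"
    by (intro set_integral_diff(2) set_integrable_subset[OF f] set_integrable_subset[OF h]) auto
  ultimately show ?thesis
    by simp
qed

lemma has_integral_cpowr_from_0: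
  fixes b :: complex and t :: real
  assumes "Re b > 0" and "t \<ge> 0"
  shows "((\<lambda>x. of_real x powr (b - 1)) has_integral (of_real t powr b / b)) {0..t}"
proof -
  have "((\<lambda>x. of_real x powr (b - 1)) has_integral
          (of_real t powr b / b - of_real 0 powr b / b)) {0..t}"
    using assms
    by (intro fundamental_theorem_of_calculus_interior)
      (auto intro!: continuous_intros derivative_eq_intros has_vector_derivative_real_field)
  then show ?thesis
    by simp
qed

lemma set_integrable_cpowr_from_0:
  fixes b :: complex and t :: real
  assumes "Re b > 0" and "t \<ge> 0"
  shows "set_integrable lborel {0..t} (\<lambda>x. of_real x powr (b - 1))"
proof -
  have "(\<lambda>x. of_real x powr (b - 1)) absolutely_integrable_on {0..t}"
  proof (rule absolutely_integrable_integrable_bound[where g = "\<lambda>x. x powr (Re b - 1)"])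
    show "norm (of_real x powr (b - 1)) \<le> x powr (Re b - 1)" if "x \<in> {0..t}" for x
      using that by (subst norm_powr_real_powr) auto
    show "(\<lambda>x. of_real x powr (b - 1)) integrable_on {0..t}"
      using has_integral_cpowr_from_0[OF assms] by blast
    show "(\<lambda>x. x powr (Re b - 1)) integrable_on {0..t}"
      using assms by (intro integrable_on_powr_from_0) auto
  qed
  moreover have "(\<lambda>x. indicator {0..t} x *\<^sub>R of_real x powr (b - 1)) \<in> borel_measurable borel"
  proof -
    have "(\<lambda>x. if x \<in> {0<..t} then of_real x powr (b - 1) else 0) \<in> borel_measurable borel"
      by (intro borel_measurable_continuous_on_if) (auto intro!: continuous_intros)
    also have "(\<lambda>x. if x \<in> {0<..t} then of_real x powr (b - 1) else 0)
        = (\<lambda>x. indicator {0..t} x *\<^sub>R of_real x powr (b - 1))"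
      by (auto simp: indicator_def fun_eq_iff)
    finally show ?thesis .
  qed
  ultimately show ?thesis
    unfolding set_integrable_def by (subst integrable_completion[symmetric]) auto
qed

lemma set_integral_cpowr_from_0:
  fixes b :: complex and t :: real
  assumes "Re b > 0" and "t \<ge> 0"
  shows "(LINT x:{0..t}|lborel. of_real x powr (b - 1)) = of_real t powr b / b"
  using set_borel_integral_eq_integral(2)[OF set_integrable_cpowr_from_0[OF assms]]
    has_integral_cpowr_from_0[OF assms]
  by (simp add: integral_unique)

definition power_density :: "complex \<Rightarrow> real \<Rightarrow> complex" where
  "power_density a x = a * of_real x powr (a - 1)"

lemma set_integrable_power_density:
  assumes "Re a > 0" and "t \<ge> 0"
  shows "set_integrable lborel {0..t} (power_density a)"
  unfolding power_density_def
  using set_integrable_mult_right[OF set_integrable_cpowr_from_0[OF assms]] .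

lemma set_integral_power_density:
  assumes "Re a > 0" and "t \<ge> 0"
  shows "(LINT x:{0..t}|lborel. power_density a x) = of_real t powr a"
proof -
  have "a \<noteq> 0"
    using assms(1) by auto
  then show ?thesis
    unfolding power_density_def using set_integral_cpowr_from_0[OF assms]
    by (simp add: set_integral_mult_right)
qed

lemma set_integral_monomial_mult_power_density:
  assumes a: "Re a > 0"
  shows "(LINT x:{0..1}|lborel. of_real (x ^ n) * power_density a x) = a / (of_nat n + a)"
proof -
  have "of_real (x ^ n) * power_density a x = a * of_real x powr ((of_nat n + a) - 1)"
    if "x \<ge> 0" for x :: real
  proof (cases "x = 0")
    case False
    then have "of_real x powr ((of_nat n + a) - 1) = of_real x powr of_nat n * of_real x powr (a - 1)"
      by (simp add: powr_def exp_add[symmetric] algebra_simps)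
    then show ?thesis
      using False by (simp add: power_density_def powr_nat')
  qed (simp add: power_density_def)
  then have "(LINT x:{0..1}|lborel. of_real (x ^ n) * power_density a x)
      = (LINT x:{0..1}|lborel. a * of_real x powr ((of_nat n + a) - 1))"
    by (intro set_lebesgue_integral_cong) auto
  also have "\<dots> = a * (LINT x:{0..1}|lborel. of_real x powr ((of_nat n + a) - 1))"
    by (rule set_integral_mult_right)
  also have "\<dots> = a / (of_nat n + a)"
    using set_integral_cpowr_from_0[of "of_nat n + a" 1] a by simp
  finally show ?thesis .
qed

lemma norm_cnj_mult_less_1:
  fixes c w :: complex
  assumes "norm c < 1" and "norm w < 1"
  shows "norm (cnj c * w) < 1"
  using mult_strict_mono[of "norm c" 1 "norm w" 1] assms by (simp add: norm_mult)

lemma kernel_has_fps_expansion: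
  assumes c: "norm c < 1"
  shows "kernel c has_fps_expansion Abs_fps (\<lambda>n. cnj c ^ n)"
  unfolding has_fps_expansion_def
proof
  have "summable (\<lambda>n. cnj c ^ n * 1 ^ n)"
    using c by (simp add: summable_geometric)
  then have "ereal 1 \<le> conv_radius (\<lambda>n. cnj c ^ n)"
    using conv_radius_geI[of "\<lambda>n. cnj c ^ n" 1] by simp
  then show "0 < fps_conv_radius (Abs_fps (\<lambda>n. cnj c ^ n))"
    unfolding fps_conv_radius_def by (simp add: order.strict_trans2[rotated])
  have "eval_fps (Abs_fps (\<lambda>n. cnj c ^ n)) w = kernel c w" if "w \<in> ball 0 1" for w
  proof -
    have "norm (cnj c * w) < 1"
      using that c by (intro norm_cnj_mult_less_1) auto
    then have "(\<lambda>n. (cnj c * w) ^ n) sums (1 / (1 - cnj c * w))"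
      by (rule geometric_sums)
    then show ?thesis
      unfolding eval_fps_def kernel_def by (simp add: sums_iff power_mult_distrib)
  qed
  then show "\<forall>\<^sub>F w in nhds 0. eval_fps (Abs_fps (\<lambda>n. cnj c ^ n)) w = kernel c w"
    using eventually_nhds_in_open[of "ball 0 1" 0] by (auto elim!: eventually_mono)
qed

lemma taylor_coeff_kernel:
  assumes "norm c < 1"
  shows "taylor_coeff (kernel c) n = cnj c ^ n"
  using fps_nth_fps_expansion[OF kernel_has_fps_expansion[OF assms], of n]
  unfolding taylor_coeff_def by simp

lemma kernel_in_H2:
  assumes c: "norm c < 1"
  shows "kernel c \<in> H2"
  unfolding H2_def
proof safe
  show "kernel c holomorphic_on ball 0 1"
    unfolding kernel_def
  proof (intro holomorphic_intros)
    fix w :: complex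
    assume "w \<in> ball 0 1"
    then have "norm (cnj c * w) < 1"
      using c by (intro norm_cnj_mult_less_1) auto
    then show "1 - cnj c * w \<noteq> 0"
      by auto
  qed
  have "(norm (taylor_coeff (kernel c) n))\<^sup>2 = (norm c ^ 2) ^ n" for n
    by (simp add: taylor_coeff_kernel[OF c] norm_power flip: power_mult) (simp add: mult.commute)
  moreover have "summable (\<lambda>n. (norm c ^ 2) ^ n)"
    using c by (intro summable_geometric) (simp add: power_less_one_iff abs_square_less_1)
  ultimately show "summable (\<lambda>n. (norm (taylor_coeff (kernel c) n))\<^sup>2)"
    by simp
qed

lemma taylor_coeff_cong:
  assumes "\<And>w. w \<in> ball 0 1 \<Longrightarrow> f w = g w"
  shows "taylor_coeff f n = taylor_coeff g n"
proof -
  have "\<forall>\<^sub>F w in nhds 0. f w = g w"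
    using eventually_nhds_in_open[of "ball 0 1" 0] assms by (auto elim!: eventually_mono)
  then show ?thesis
    unfolding taylor_coeff_def by (simp add: higher_deriv_cong_ev)
qed

lemma H2_inner_kernel:
  assumes h: "h \<in> H2" and z: "z \<in> ball 0 1"
    and k: "\<And>w. w \<in> ball 0 1 \<Longrightarrow> k w = kernel z w"
  shows "H2_inner h k = h z"
proof -
  have "cnj (taylor_coeff k n) = z ^ n" for n
    using taylor_coeff_cong[OF k, where n = n] taylor_coeff_kernel[of z n] z by simp
  moreover have "(\<lambda>n. (deriv ^^ n) h 0 / fact n * (z - 0) ^ n) sums h z"
    using h z by (intro holomorphic_power_series) (simp_all add: H2_def)
  ultimately have "(\<lambda>n. taylor_coeff h n * cnj (taylor_coeff k n)) sums h z"
    by (simp add: taylor_coeff_def)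
  then show ?thesis
    unfolding H2_inner_def by (rule sums_unique[symmetric])
qed

lemma Re_one_div_one_minus_pos:
  fixes z :: complex
  assumes "norm z < 1"
  shows "Re (1 / (1 - z)) > 0"
proof -
  have "Re z < 1"
    using assms complex_Re_le_cmod[of z] by simp
  then show ?thesis
    by (simp add: Re_divide) (intro divide_pos_pos add_pos_nonneg, auto)
qed

lemma monomial_in_L2_01: "(\<lambda>x. of_real (x ^ n)) \<in> L2_01"
proof -
  have "integrable lborel (\<lambda>x. indicator {0..1} x *\<^sub>R (norm (of_real (x ^ n) :: complex))\<^sup>2)"
    by (intro borel_integrable_compact) (auto intro!: continuous_intros)
  then show ?thesis
    unfolding L2_01_def set_integrable_def by simp
qed

lemma indicator_atLeastAtMost_in_L2_01: "(indicator {0..s} :: real \<Rightarrow> complex) \<in> L2_01"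
proof -
  have "(\<lambda>x. indicator {0..1} x *\<^sub>R (norm (indicator {0..s} x :: complex))\<^sup>2)
      = (indicator ({0..1} \<inter> {0..s}) :: real \<Rightarrow> real)"
    by (auto simp: fun_eq_iff indicator_def)
  moreover have "integrable lborel (indicator ({0..1} \<inter> {0..s}) :: real \<Rightarrow> real)"
    by (intro integrable_real_indicator)
      (auto simp: emeasure_lborel_Icc_eq intro: le_less_trans[OF emeasure_mono[of _ "{0..1}"]])
  ultimately show ?thesis
    unfolding L2_01_def set_integrable_def by simp
qed

lemma L2_01_imp_set_integrable_cnj:
  assumes "g \<in> L2_01"
  shows "set_integrable lborel {0..1} (\<lambda>x. cnj (g x))"
proof -
  have g: "g \<in> borel_measurable lborel" "set_integrable lborel {0..1} (\<lambda>x. (norm (g x))\<^sup>2)"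
    using assms by (auto simp: L2_01_def)
  have "set_integrable lborel {0..1} (\<lambda>x. 1 + (norm (g x))\<^sup>2)"
    using g by (intro set_integral_add) (auto simp: set_integrable_def intro!: borel_integrable_compact)
  then show ?thesis
  proof (rule set_integrable_bound)
    have "cnj \<in> borel_measurable borel"
      by (intro borel_measurable_continuous_onI continuous_intros)
    then show "set_borel_measurable lborel {0..1} (\<lambda>x. cnj (g x))"
      using measurable_compose[of g lborel borel cnj borel] g
      unfolding set_borel_measurable_def by (simp add: comp_def)
    have "norm (g x) \<le> 1 + (norm (g x))\<^sup>2" for x
    proof -
      have "0 \<le> (norm (g x) - 1)\<^sup>2"
        by simp
      then have "2 * norm (g x) \<le> 1 + (norm (g x))\<^sup>2"
        by (simp add: power2_eq_square algebra_simps)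
      then show ?thesis
        using norm_ge_zero[of "g x"] by linarith
    qed
    then show "AE x in lborel. x \<in> {0..1} \<longrightarrow> norm (cnj (g x)) \<le> norm (1 + (norm (g x))\<^sup>2)"
      by simp
  qed
qed

lemma L2_inner_indicator_atLeastAtMost:
  assumes "s \<le> 1"
  shows "L2_inner (indicator {0..s}) g = (LINT x:{0..s}|lborel. cnj (g x))"
  unfolding L2_inner_def set_lebesgue_integral_def using assms
  by (intro Bochner_Integration.integral_cong) (auto simp: indicator_def)

lemma sarason_transform_point_evaluation:
  assumes U: "sarason_transform U" and z: "z \<in> ball 0 1"
  obtains g where "g \<in> L2_01" and "\<And>f. f \<in> L2_01 \<Longrightarrow> U f z = L2_inner f g"
proof -
  obtain g where g: "g \<in> L2_01" and Ug: "\<And>w. w \<in> ball 0 1 \<Longrightarrow> U g w = kernel z w"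
    using U kernel_in_H2[of z] z unfolding sarason_transform_def by force
  have "U f z = L2_inner f g" if f: "f \<in> L2_01" for f
  proof -
    have "U f z = H2_inner (U f) (U g)"
      using U f z Ug by (intro H2_inner_kernel[symmetric]) (auto simp: sarason_transform_def)
    also have "\<dots> = L2_inner f g"
      using U f g by (simp add: sarason_transform_def)
    finally show ?thesis .
  qed
  with g show ?thesis
    by (rule that)
qed

lemma sarason_transform_representer_moments:
  assumes U: "sarason_transform U" and z: "z \<in> ball 0 1"
    and g: "\<And>f. f \<in> L2_01 \<Longrightarrow> U f z = L2_inner f g"
  shows "(LINT x:{0..1}|lborel. of_real (x ^ n) * cnj (g x))
           = (LINT x:{0..1}|lborel. of_real (x ^ n) * power_density (1 / (1 - z)) x)"
proof -
  have "z \<noteq> 1"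
    using z by auto
  have denom: "of_nat (n + 1) * (1 - of_real (real n / real (n + 1)) * z) = 1 + of_nat n * (1 - z)"
    using of_nat_neq_0[of n, where 'a = complex] by (simp add: field_simps)
  have "Re (1 + of_nat n * (1 - z)) > 0"
    using z complex_Re_le_cmod[of z] by (simp add: add_pos_nonneg)
  then have "1 + of_nat n * (1 - z) \<noteq> 0"
    by (metis less_irrefl zero_complex.sel(1))
  have "(LINT x:{0..1}|lborel. of_real (x ^ n) * cnj (g x)) = U (\<lambda>x. of_real (x ^ n)) z"
    using g[OF monomial_in_L2_01] by (simp add: L2_inner_def)
  also have "\<dots> = 1 / of_nat (n + 1) * kernel (of_real (real n / real (n + 1))) z"
    using U z by (simp add: sarason_transform_def)
  also have "\<dots> = 1 / (1 + of_nat n * (1 - z))"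
    unfolding kernel_def denom[symmetric] by simp
  also have "\<dots> = (1 / (1 - z)) / (of_nat n + 1 / (1 - z))"
    using \<open>1 + of_nat n * (1 - z) \<noteq> 0\<close> \<open>z \<noteq> 1\<close> by (simp add: field_simps)
  also have "\<dots> = (LINT x:{0..1}|lborel. of_real (x ^ n) * power_density (1 / (1 - z)) x)"
    using z by (intro set_integral_monomial_mult_power_density[symmetric] Re_one_div_one_minus_pos) simp
  finally show ?thesis .
qed

lemma of_real_powr_one_div_one_minus:
  fixes s :: real and z :: complex
  assumes s: "s \<ge> 0" and z: "z \<noteq> 1"
  shows "of_real s powr (1 / (1 - z)) = of_real (sqrt s) * exp (of_real (ln s / 2) * ((1 + z) / (1 - z)))"
proof (cases "s = 0")
  case False
  then have "of_real s powr (1 / (1 - z)) = exp (1 / (1 - z) * of_real (ln s))"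
    using s by (simp add: powr_def Ln_of_real)
  also have "1 / (1 - z) * of_real (ln s) = of_real (ln s / 2) + of_real (ln s / 2) * ((1 + z) / (1 - z))"
    using z by (simp add: field_simps)
  also have "exp (of_real (ln s / 2) + of_real (ln s / 2) * ((1 + z) / (1 - z)))
      = of_real (sqrt s) * exp (of_real (ln s / 2) * ((1 + z) / (1 - z)))"
  proof -
    have "exp (of_real (ln s / 2)) = (of_real (sqrt s) :: complex)"
      using s False by (simp only: exp_of_real) (simp add: powr_half_sqrt[symmetric] powr_def)
    then show ?thesis
      by (simp only: exp_add)
  qed
  finally show ?thesis .
qed simp \<comment> \<open>for s = 0 both sides vanish, whatever the junk value ln 0\<close>

theorem lemma2p5:
  fixes U :: "(real \<Rightarrow> complex) \<Rightarrow> (complex \<Rightarrow> complex)"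
    and s :: real and z :: complex
  assumes "sarason_transform U"
    and "s \<in> {0..1}"
    and "z \<in> ball 0 1"
  shows "U (indicator {0..s}) z
           = complex_of_real (sqrt s) * exp (complex_of_real (ln s / 2) * ((1 + z) / (1 - z)))"
proof -
  have z: "norm z < 1"
    using assms(3) by simp
  define a where "a = 1 / (1 - z)"
  have a: "Re a > 0"
    unfolding a_def using z by (rule Re_one_div_one_minus_pos)
  obtain g where g: "g \<in> L2_01" and eval: "\<And>f. f \<in> L2_01 \<Longrightarrow> U f z = L2_inner f g"
    using sarason_transform_point_evaluation[OF assms(1,3)] by blast
  have moments: "(LINT x:{0..1}|lborel. of_real (x ^ n) * cnj (g x))
      = (LINT x:{0..1}|lborel. of_real (x ^ n) * power_density a x)" for n
    unfolding a_def by (rule sarason_transform_representer_moments[OF assms(1,3) eval])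
  have "{0..1} \<inter> {..s} = {0..s}"
    using assms(2) by auto
  then have "(LINT x:{0..s}|lborel. cnj (g x)) = (LINT x:{0..s}|lborel. power_density a x)"
    using set_integral_atMost_eq_if_moments_eq[OF compact_Icc L2_01_imp_set_integrable_cnj[OF g]
        set_integrable_power_density[OF a zero_le_one] moments, of s]
    by (simp only:)
  then have "U (indicator {0..s}) z = of_real s powr a"
    using eval[OF indicator_atLeastAtMost_in_L2_01] L2_inner_indicator_atLeastAtMost
      set_integral_power_density[OF a] assms(2) by simp
  also have "\<dots> = of_real (sqrt s) * exp (of_real (ln s / 2) * ((1 + z) / (1 - z)))"
    unfolding a_def using assms(2) z by (intro of_real_powr_one_div_one_minus) auto
  finally show ?thesis .
qed

end
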